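(* Let $w\in\Sigma^*$ and let $u$ be a scattered factor of $w$ with $|u|\le\iota(w)$. Then $|E(w,u)|\ge\binom{\iota(w)}{|u|}$.
   Context: The alphabet $\Sigma$ is assumed to be exactly the set of letters occurring in $w$. A word $u$ is a scattered factor of $w$ if $w=v_1u[1]v_2\cdots v_{|u|}u[|u|]v_{|u|+1}$ for some words $v_i$. An embedding of $u$ in $w$ is a map $e:\{1,\dots,|u|\}\to\{1,\dots,|w|\}$ with $e(1)<\dots<e(|u|)$ and $u[i]=w[e(i)]$ for all $i$; $E(w,u)$ is the set of all embeddings of $u$ in $w$. The universality index $\iota(w)$ is the largest $k\in\mathbb{N}_0$ such that every word in $\Sigma^k$ is a scattered factor of $w$. *)

theory Defs
  imports Main "HOL-Library.Sublist" "HOL-Library.FuncSet"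
begin

text \<open>Words are lists; positions are 1-based as in the paper. The alphabet of w is set w.\<close>

definition scattered_factor :: "'a list \<Rightarrow> 'a list \<Rightarrow> bool" where
  "scattered_factor u w \<longleftrightarrow> subseq u w"

definition embeddings :: "'a list \<Rightarrow> 'a list \<Rightarrow> (nat \<Rightarrow> nat) set" where
  "embeddings w u = {e \<in> {1..length u} \<rightarrow>\<^sub>E {1..length w}.
      (\<forall>i j. 1 \<le> i \<longrightarrow> i < j \<longrightarrow> j \<le> length u \<longrightarrow> e i < e j) \<and>
      (\<forall>i. 1 \<le> i \<longrightarrow> i \<le> length u \<longrightarrow> u ! (i - 1) = w ! (e i - 1))}"

definition iota :: "'a list \<Rightarrow> nat" where
  "iota w = (GREATEST k. \<forall>v. set v \<subseteq> set w \<longrightarrow> length v = k \<longrightarrow> scattered_factor v w)"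

end

theory Submission
  imports Defs
begin

text \<open>If w is (k+1)-universal over A, cut w after the shortest prefix containing every
letter of A. The last letter c of that prefix occurs nowhere before it, so for every v of
length k the embedding of c v must place c there, and the remainder is k-universal.
Counting embeddings of u = a u' into such a w = w1 w2 that either lie entirely in w2 or map
a to a fixed occurrence in w1 and u' into w2 gives Pascal's recursion, whence at least
k choose |u| embeddings.\<close>

definition universal :: "'a set \<Rightarrow> nat \<Rightarrow> 'a list \<Rightarrow> bool" where
  "universal A k w \<longleftrightarrow> (\<forall>v. set v \<subseteq> A \<longrightarrow> length v = k \<longrightarrow> subseq v w)"

text \<open>Embeddings as strictly increasing lists of 0-based positions.\<close>

definition positions :: "'a list \<Rightarrow> 'a list \<Rightarrow> nat list set" where
  "positions u w = {p. length p = length u \<and> sorted_wrt (<) p \<and>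
     (\<forall>i<length p. p ! i < length w \<and> w ! (p ! i) = u ! i)}"

lemma subseq_Cons_append_notinD:
  assumes "c \<notin> set xs" and "subseq (c # v) (xs @ c # ys)"
  shows "subseq v ys"
  using assms
proof (induction xs)
  case Nil
  then show ?case by simp
next
  case (Cons x xs)
  then show ?case by (metis list.set_intros(1,2) append_Cons subseq_Cons2_neq)
qed

lemma set_mono_subseq: "subseq xs ys \<Longrightarrow> set xs \<subseteq> set ys"
  by (induction rule: list_emb.induct) auto

lemma universal_Suc_subset_set:
  assumes "universal A (Suc k) w"
  shows "A \<subseteq> set w"
proof
  fix a assume "a \<in> A"
  then have "subseq (replicate (Suc k) a) w"
    using assms \<open>a \<in> A\<close> unfolding universal_def by (simp del: replicate_Suc)
  then show "a \<in> set w"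
    using set_mono_subseq by fastforce
qed

lemma universal_Suc_split:
  assumes "universal A (Suc k) w" and "A \<noteq> {}"
  obtains w\<^sub>1 w\<^sub>2 where "w = w\<^sub>1 @ w\<^sub>2" and "A \<subseteq> set w\<^sub>1" and "universal A k w\<^sub>2"
proof -
  define n where "n = (LEAST n. A \<subseteq> set (take n w))"
  have A_take: "A \<subseteq> set (take n w)"
    unfolding n_def by (rule LeastI[of _ "length w"]) (use universal_Suc_subset_set[OF assms(1)] in simp)
  have n_le: "n \<le> length w"
    unfolding n_def by (rule Least_le) (use universal_Suc_subset_set[OF assms(1)] in simp)
  have "n \<noteq> 0" using A_take assms(2) by auto
  then obtain m where n: "n = Suc m" by (cases n) auto
  have A_not_take: "\<not> A \<subseteq> set (take m w)"
    using not_less_Least[of m "\<lambda>n. A \<subseteq> set (take n w)"] n unfolding n_def by simp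
  define c where "c = w ! m"
  have take_n: "take n w = take m w @ [c]"
    using n n_le unfolding c_def by (simp add: take_Suc_conv_app_nth)
  have w_eq: "w = take m w @ c # drop n w"
    by (metis append.assoc append_Cons append_Nil append_take_drop_id take_n)
  have "c \<in> A" and c_first: "c \<notin> set (take m w)"
    using A_take A_not_take take_n by auto
  have "universal A k (drop n w)"
    unfolding universal_def
  proof (intro allI impI)
    fix v :: "'a list" assume "set v \<subseteq> A" "length v = k"
    then have "subseq (c # v) w" using assms(1) \<open>c \<in> A\<close> unfolding universal_def by auto
    then show "subseq v (drop n w)" using subseq_Cons_append_notinD[OF c_first] w_eq by metis
  qed
  with A_take show thesis by (metis append_take_drop_id that)
qed

lemma finite_positions: "finite (positions u w)"
proof (rule finite_subset)
  show "positions u w \<subseteq> {p. set p \<subseteq> {..<length w} \<and> length p = length u}"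
    unfolding positions_def by (auto simp: in_set_conv_nth)
  show "finite {p. set p \<subseteq> {..<length w} \<and> length p = length u}"
    by (rule finite_lists_length_eq) simp
qed

lemma positions_Nil [simp]: "positions [] w = {[]}"
  unfolding positions_def by auto

lemma positions_append_shift:
  assumes "p \<in> positions u w\<^sub>2"
  shows "map ((+) (length w\<^sub>1)) p \<in> positions u (w\<^sub>1 @ w\<^sub>2)"
  using assms unfolding positions_def by (auto simp: sorted_wrt_map nth_append)

lemma positions_Cons_append_shift:
  assumes "j < length w\<^sub>1" and "w\<^sub>1 ! j = a" and "p \<in> positions u w\<^sub>2"
  shows "j # map ((+) (length w\<^sub>1)) p \<in> positions (a # u) (w\<^sub>1 @ w\<^sub>2)"
  using positions_append_shift[OF assms(3)] assms
  unfolding positions_def by (auto simp: nth_append nth_Cons' in_set_conv_nth)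

lemma card_positions_append_ge:
  assumes "a \<in> set w\<^sub>1"
  shows "card (positions (a # u) w\<^sub>2) + card (positions u w\<^sub>2)
           \<le> card (positions (a # u) (w\<^sub>1 @ w\<^sub>2))"
proof -
  obtain j where j: "j < length w\<^sub>1" "w\<^sub>1 ! j = a"
    using assms by (auto simp: in_set_conv_nth)
  let ?shift = "map ((+) (length w\<^sub>1))"
  define S\<^sub>1 where "S\<^sub>1 = ?shift ` positions (a # u) w\<^sub>2"
  define S\<^sub>2 where "S\<^sub>2 = (\<lambda>p. j # ?shift p) ` positions u w\<^sub>2"
  have inj_shift: "inj ?shift" by (simp add: inj_on_def)
  have card_S\<^sub>1: "card S\<^sub>1 = card (positions (a # u) w\<^sub>2)"
    unfolding S\<^sub>1_def by (rule card_image[OF inj_on_subset[OF inj_shift subset_UNIV]])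
  have card_S\<^sub>2: "card S\<^sub>2 = card (positions u w\<^sub>2)"
    unfolding S\<^sub>2_def by (rule card_image) (simp add: inj_on_def inj_shift[THEN inj_eq])
  have disjoint: "S\<^sub>1 \<inter> S\<^sub>2 = {}"
  proof -
    have "j \<notin> set p" if "p \<in> S\<^sub>1" for p
      using that j(1) unfolding S\<^sub>1_def by auto
    moreover have "j \<in> set p" if "p \<in> S\<^sub>2" for p
      using that unfolding S\<^sub>2_def by auto
    ultimately show ?thesis by blast
  qed
  have "card (positions (a # u) w\<^sub>2) + card (positions u w\<^sub>2) = card (S\<^sub>1 \<union> S\<^sub>2)"
    using card_S\<^sub>1 card_S\<^sub>2 card_Un_disjoint[OF _ _ disjoint] by (simp add: S\<^sub>1_def S\<^sub>2_def finite_positions)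
  also have "\<dots> \<le> card (positions (a # u) (w\<^sub>1 @ w\<^sub>2))"
  proof (rule card_mono[OF finite_positions])
    show "S\<^sub>1 \<union> S\<^sub>2 \<subseteq> positions (a # u) (w\<^sub>1 @ w\<^sub>2)"
      unfolding S\<^sub>1_def S\<^sub>2_def
      using positions_append_shift positions_Cons_append_shift[OF j] by blast
  qed
  finally show ?thesis .
qed

lemma binomial_le_card_positions:
  assumes "universal A k w" and "set u \<subseteq> A"
  shows "k choose length u \<le> card (positions u w)"
  using assms
proof (induction k arbitrary: w u)
  case 0
  then show ?case by (cases u) auto
next
  case (Suc k)
  show ?case
  proof (cases u)
    case Nil
    then show ?thesis by simp
  next
    case (Cons a u')
    with Suc.prems(2) have "A \<noteq> {}" by auto
    with Suc.prems(1) obtain w\<^sub>1 w\<^sub>2 where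
      w: "w = w\<^sub>1 @ w\<^sub>2" "A \<subseteq> set w\<^sub>1" "universal A k w\<^sub>2"
      by (rule universal_Suc_split)
    have "Suc k choose length u = (k choose length u) + (k choose length u')"
      using Cons by simp
    also have "\<dots> \<le> card (positions u w\<^sub>2) + card (positions u' w\<^sub>2)"
      using Suc.prems(2) Cons by (intro add_mono Suc.IH[OF w(3)]) auto
    also have "\<dots> \<le> card (positions u w)"
      using Suc.prems(2) w Cons by (auto intro: card_positions_append_ge)
    finally show ?thesis .
  qed
qed

lemma finite_embeddings: "finite (embeddings w u)"
proof (rule finite_subset)
  show "embeddings w u \<subseteq> {1..length u} \<rightarrow>\<^sub>E {1..length w}"
    unfolding embeddings_def by auto
  show "finite ({1..length u} \<rightarrow>\<^sub>E {1..length w})"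
    by (rule finite_PiE) auto
qed

lemma card_positions_le_card_embeddings: "card (positions u w) \<le> card (embeddings w u)"
proof -
  define F where "F p = (\<lambda>i\<in>{1..length u}. Suc (p ! (i - 1)))" for p :: "nat list"
  have "inj_on F (positions u w)"
  proof (rule inj_onI)
    fix p q assume p: "p \<in> positions u w" and q: "q \<in> positions u w" and "F p = F q"
    have len: "length p = length u" "length q = length u"
      using p q unfolding positions_def by auto
    show "p = q"
    proof (rule nth_equalityI)
      show "length p = length q" using len by simp
      fix i assume "i < length p"
      moreover have "F p (Suc i) = F q (Suc i)" using \<open>F p = F q\<close> by simp
      ultimately show "p ! i = q ! i" using len unfolding F_def by simp
    qed
  qed
  moreover have "F ` positions u w \<subseteq> embeddings w u"
  proof
    fix e assume "e \<in> F ` positions u w"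
    then obtain p where p: "p \<in> positions u w" and e: "e = F p" by auto
    have len: "length p = length u" and sorted: "sorted_wrt (<) p"
      and pos: "\<And>i. i < length p \<Longrightarrow> p ! i < length w \<and> w ! (p ! i) = u ! i"
      using p unfolding positions_def by auto
    have "e \<in> {1..length u} \<rightarrow>\<^sub>E {1..length w}"
      using pos len unfolding e F_def by (auto simp: Suc_le_eq)
    moreover have "e i < e j" if "1 \<le> i" "i < j" "j \<le> length u" for i j
      using that sorted len unfolding e F_def by (simp add: sorted_wrt_iff_nth_less)
    moreover have "u ! (i - 1) = w ! (e i - 1)" if "1 \<le> i" "i \<le> length u" for i
      using that pos len unfolding e F_def by auto
    ultimately show "e \<in> embeddings w u" unfolding embeddings_def by blast
  qed
  ultimately have "card (F ` positions u w) \<le> card (embeddings w u)"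
    and "card (F ` positions u w) = card (positions u w)"
    using card_mono[OF finite_embeddings] card_image by blast+
  then show ?thesis by simp
qed

text \<open>For w = [] every k satisfies the predicate defining iota w, so iota [] is an
unspecified value of GREATEST; the lemma holds anyway, as [] is universal over the empty
alphabet for every k.\<close>

lemma universal_iota: "universal (set w) (iota w) w"
proof (cases "w = []")
  case True
  then show ?thesis by (simp add: universal_def)
next
  case False
  have bounded: "k \<le> length w" if "universal (set w) k w" for k
  proof -
    have "set (replicate k (hd w)) \<subseteq> set w" using False by auto
    then have "subseq (replicate k (hd w)) w"
      using that unfolding universal_def by (metis length_replicate)
    then show ?thesis using list_emb_length by fastforce
  qed
  have "iota w = (GREATEST k. universal (set w) k w)"
    unfolding iota_def universal_def scattered_factor_def ..
  also have "universal (set w) \<dots> w"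
    by (rule GreatestI_nat[of _ 0 "length w"]) (simp_all add: universal_def bounded)
  finally show ?thesis .
qed

theorem lemma22:
  fixes w u :: "'a list"
  assumes "scattered_factor u w"
    and "length u \<le> iota w"
  shows "card (embeddings w u) \<ge> iota w choose length u"
proof -
  have "set u \<subseteq> set w"
    using assms(1) unfolding scattered_factor_def by (rule set_mono_subseq)
  then have "iota w choose length u \<le> card (positions u w)"
    using binomial_le_card_positions[OF universal_iota] by blast
  also have "\<dots> \<le> card (embeddings w u)"
    by (rule card_positions_le_card_embeddings)
  finally show ?thesis .
qed

end
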